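(* Let $f$ be analytic on $\mathbb{D}$ with $f(z)=z+\sum_{n=2}^{\infty}a_nz^n$ and $\operatorname{Re}f'(z)>0$ for all $z\in\mathbb{D}$, and let $\gamma_1=\frac12a_2$, $\gamma_2=\frac12\left(a_3-\frac12a_2^2\right)$. Then $$-\frac{1}{\sqrt5}\le|\gamma_2|-|\gamma_1|\le\frac13.$$ Both inequalities are sharp.
   Context: $\mathbb{D}=\{z\in\mathbb{C}:|z|<1\}$. The class of such $f$ is the class $\mathcal{R}$ of functions of bounded turning. $\gamma_1,\gamma_2$ are the first two logarithmic coefficients, defined by $\log\frac{f(z)}{z}=2\sum_{n\ge1}\gamma_nz^n$ near $0$. *)

theory Defs
  imports "HOL-Complex_Analysis.Complex_Analysis"
begin

definition taylor_coeff :: "(complex \<Rightarrow> complex) \<Rightarrow> nat \<Rightarrow> complex" where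
  "taylor_coeff f n = (deriv ^^ n) f 0 / of_nat (fact n)"

definition bounded_turning :: "(complex \<Rightarrow> complex) \<Rightarrow> bool" where
  "bounded_turning f \<longleftrightarrow> f holomorphic_on ball 0 1 \<and> f 0 = 0 \<and> deriv f 0 = 1 \<and>
     (\<forall>z\<in>ball 0 1. Re (deriv f z) > 0)"

definition gamma1 :: "(complex \<Rightarrow> complex) \<Rightarrow> complex" where
  "gamma1 f = taylor_coeff f 2 / 2"

definition gamma2 :: "(complex \<Rightarrow> complex) \<Rightarrow> complex" where
  "gamma2 f = (taylor_coeff f 3 - (taylor_coeff f 2)^2 / 2) / 2"

end

theory Submission
  imports Defs
begin

(* A function f is of bounded turning exactly when f' = (1 + w) / (1 - w) for a Schwarz
   function w(z) = z h(z) with |h| <= 1 on the disc.  Differentiating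
   f'(z) (1 - z h(z)) = 1 + z h(z) twice at 0 gives gamma1 = h(0)/2 and
   gamma2 = h'(0)/3 + h(0)^2/12, and the Schwarz-Pick bound |h'(0)| <= 1 - |h(0)|^2 turns
   both inequalities into elementary ones in t = |h(0)|.  The upper bound is attained for
   h(z) = z, i.e. f'(z) = (1 + z^2)/(1 - z^2); the lower bound for the disc automorphism
   h(z) = (u - z)/(1 - u z) with u = 2/sqrt 5, which makes gamma2 vanish. *)

lemma has_field_derivative_vanishing_on_open:
  assumes "open S" "x \<in> S" "\<And>z. z \<in> S \<Longrightarrow> F z = 0" "(F has_field_derivative D) (at x)"
  shows "D = 0"
proof -
  have "(F has_field_derivative 0) (at x)"
    using assms(1-3) by (intro has_field_derivative_transform_within_open[OF DERIV_const[of 0]]) auto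
  then show ?thesis
    using DERIV_unique[OF assms(4)] by blast
qed

lemma convex_primitive_vanishing:
  fixes p :: "complex \<Rightarrow> complex"
  assumes "convex S" "open S" "p holomorphic_on S" "a \<in> S"
  obtains f where "f holomorphic_on S" "f a = 0" "\<And>z. z \<in> S \<Longrightarrow> deriv f z = p z"
proof -
  obtain g where g: "\<And>z. z \<in> S \<Longrightarrow> (g has_field_derivative p z) (at z within S)"
    using holomorphic_convex_primitive'[OF assms(1-3)] by blast
  define f where "f z = g z - g a" for z
  have f': "(f has_field_derivative p z) (at z)" if "z \<in> S" for z
    unfolding f_def using g[OF that] at_within_open[OF that \<open>open S\<close>]
    by (auto intro!: derivative_eq_intros)
  have "f holomorphic_on S"
    using f' holomorphic_on_def field_differentiable_def has_field_derivative_at_within by blast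
  moreover have "\<And>z. z \<in> S \<Longrightarrow> deriv f z = p z"
    using f' DERIV_imp_deriv by blast
  ultimately show ?thesis
    using that by (simp add: f_def)
qed

lemma Re_cayley_pos:
  fixes w :: complex
  assumes "cmod w < 1"
  shows "0 < Re ((1 + w) / (1 - w))"
proof -
  have num: "(Re w)^2 + (Im w)^2 < 1"
    using assms by (simp add: abs_square_less_1 flip: cmod_power2)
  have "0 < (cmod (1 - w))^2"
    using assms by auto
  then have den: "0 < (Re (1 - w))^2 + (Im (1 - w))^2"
    by (simp only: cmod_power2)
  have "Re ((1 + w) / (1 - w)) = (1 - ((Re w)^2 + (Im w)^2)) / ((Re (1 - w))^2 + (Im (1 - w))^2)"
    by (simp add: Re_divide algebra_simps power2_eq_square)
  then show ?thesis
    using num den by simp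
qed

lemma norm_inverse_cayley_less_1:
  fixes p :: complex
  assumes "0 < Re p"
  shows "cmod ((p - 1) / (p + 1)) < 1"
proof -
  have "(cmod (p - 1))^2 < (cmod (p + 1))^2"
    unfolding cmod_power2 using assms by (simp add: power2_eq_square algebra_simps)
  then have "cmod (p - 1) < cmod (p + 1)"
    by (rule power_less_imp_less_base) simp
  then show ?thesis
    by (simp add: norm_divide divide_less_eq)
qed

lemma Schwarz_Pick_deriv_0:
  assumes holh: "h holomorphic_on ball 0 1" and h_lt: "\<And>z. cmod z < 1 \<Longrightarrow> cmod (h z) < 1"
  shows "cmod (deriv h 0) \<le> 1 - (cmod (h 0))^2"
proof -
  define a where "a = h 0"
  have a_lt: "cmod a < 1"
    using h_lt[of 0] by (simp add: a_def)
  have pos: "0 < 1 - (cmod a)^2"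
    using a_lt by (simp add: abs_square_less_1)
  have c_eq: "1 - cnj a * a = of_real (1 - (cmod a)^2)"
    using complex_norm_square[of a] by (simp add: mult.commute)
  have c_nz: "1 - cnj a * a \<noteq> 0"
    using pos unfolding c_eq of_real_eq_0_iff by simp
  define g where "g = Moebius_function 0 a \<circ> h"
  have holg: "g holomorphic_on ball 0 1"
    unfolding g_def
    by (rule holomorphic_on_compose_gen[OF holh Moebius_function_holomorphic[OF a_lt]])
       (use h_lt in auto)
  have "g 0 = 0"
    by (simp add: g_def a_def Moebius_function_eq_zero)
  moreover have "cmod (g z) < 1" if "cmod z < 1" for z
    unfolding g_def using Moebius_function_norm_lt_1[OF a_lt h_lt[OF that]] by simp
  ultimately have "cmod (deriv g 0) \<le> 1"
    using Schwarz_Lemma'[OF holg] by blast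
  have "(Moebius_function 0 a has_field_derivative 1 / (1 - cnj a * a)) (at a)"
    unfolding Moebius_function_simple[abs_def] using c_nz
    by (auto intro!: derivative_eq_intros simp: power2_eq_square)
  then have "(g has_field_derivative 1 / (1 - cnj a * a) * deriv h 0) (at 0)"
    unfolding g_def a_def
    by (rule DERIV_chain[OF _ holomorphic_derivI[OF holh open_ball]]) simp
  then have "deriv g 0 = deriv h 0 / (1 - cnj a * a)"
    by (simp add: DERIV_imp_deriv)
  then have "cmod (deriv g 0) = cmod (deriv h 0) / (1 - (cmod a)^2)"
    using pos by (simp only: c_eq norm_divide norm_of_real abs_of_pos)
  with \<open>cmod (deriv g 0) \<le> 1\<close> pos show ?thesis
    by (simp add: a_def divide_le_eq)
qed

lemma Schwarz_Pick_deriv_0_le: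
  assumes holh: "h holomorphic_on ball 0 1" and h_le: "\<And>z. cmod z < 1 \<Longrightarrow> cmod (h z) \<le> 1"
  shows "cmod (deriv h 0) \<le> 1 - (cmod (h 0))^2"
proof (cases "\<exists>z. cmod z < 1 \<and> cmod (h z) = 1")
  case True
  then obtain z0 where z0: "cmod z0 < 1" "cmod (h z0) = 1"
    by blast
  have "h constant_on ball 0 1"
    using z0 h_le
    by (intro maximum_modulus_principle[OF holh open_ball connected_ball open_ball subset_refl, of z0]) auto
  then obtain c where c: "\<And>z. z \<in> ball 0 1 \<Longrightarrow> h z = c"
    by (auto simp: constant_on_def)
  have "(h has_field_derivative 0) (at 0)"
    by (rule has_field_derivative_transform_within_open[OF DERIV_const[of c] open_ball[of 0 1]]) (auto simp: c)
  moreover have "cmod (h 0) = 1"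
    using c[of 0] c[of z0] z0 by simp
  ultimately show ?thesis
    by (simp add: DERIV_imp_deriv)
next
  case False
  then have "cmod (h z) < 1" if "cmod z < 1" for z
    using h_le[OF that] that by (auto simp: le_less)
  then show ?thesis
    by (rule Schwarz_Pick_deriv_0[OF holh])
qed

lemma sqrt5_quadratic_lower_bound:
  fixes t :: real
  assumes "2 \<le> t * sqrt 5"
  shows "t / 2 - 1 / sqrt 5 \<le> (5 * t^2 - 4) / 12"
proof -
  define q where "q = sqrt 5"
  have q: "q^2 = 5" "2 < q"
    by (simp_all add: q_def real_less_rsqrt)
  have tq: "2 \<le> t * q"
    using assms by (simp add: q_def)
  have "(2 * q) * q \<le> (5 * t) * q"
    using tq q(1) by (simp add: power2_eq_square algebra_simps)
  then have "2 * q \<le> 5 * t"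
    using q(2) by simp
  then have "0 \<le> (t * q - 2) * (5 * t + 2 * q - 6)"
    using tq q(2) by simp
  also have "(t * q - 2) * (5 * t + 2 * q - 6) = 12 * q * ((5 * t^2 - 4) / 12 - (t / 2 - 1 / q))"
    using q by (simp add: field_simps power2_eq_square)
  finally show ?thesis
    using q by (simp add: q_def zero_le_mult_iff)
qed

lemma gamma_difference_bounds:
  fixes u v :: complex
  assumes v_le: "cmod v \<le> 1 - (cmod u)^2"
  shows "- 1 / sqrt 5 \<le> cmod (v / 3 + u^2 / 12) - cmod (u / 2)"
    and "cmod (v / 3 + u^2 / 12) - cmod (u / 2) \<le> 1 / 3"
proof -
  have norm_u2: "cmod (u^2 / 12) = (cmod u)^2 / 12" and norm_v: "cmod (v / 3) = cmod v / 3"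
    by (simp_all add: norm_divide norm_power)
  have norm_u: "cmod (u / 2) = cmod u / 2"
    by (simp add: norm_divide)
  have "cmod (v / 3 + u^2 / 12) \<le> cmod v / 3 + (cmod u)^2 / 12"
    using norm_triangle_ineq[of "v / 3" "u^2 / 12"] norm_u2 norm_v by simp
  then show "cmod (v / 3 + u^2 / 12) - cmod (u / 2) \<le> 1 / 3"
    using v_le norm_u norm_ge_zero[of u] zero_le_power2[of "cmod u"] by linarith
  show "- 1 / sqrt 5 \<le> cmod (v / 3 + u^2 / 12) - cmod (u / 2)"
  proof (cases "cmod u * sqrt 5 \<le> 2")
    case True
    then have "cmod (u / 2) \<le> 1 / sqrt 5"
      by (simp add: norm_u field_simps)
    then show ?thesis
      using norm_ge_zero[of "v / 3 + u^2 / 12"] by linarith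
  next
    case False
    have "(cmod u)^2 / 12 - cmod v / 3 \<le> cmod (v / 3 + u^2 / 12)"
      using norm_triangle_ineq2[of "u^2 / 12" "- (v / 3)"] norm_u2 norm_v by (simp add: add.commute)
    moreover have "(5 * (cmod u)^2 - 4) / 12 \<le> (cmod u)^2 / 12 - cmod v / 3"
      using v_le by (simp add: field_simps)
    moreover have "cmod u / 2 - 1 / sqrt 5 \<le> (5 * (cmod u)^2 - 4) / 12"
      using False by (intro sqrt5_quadratic_lower_bound) simp
    ultimately show ?thesis
      by (simp add: norm_u)
  qed
qed

lemma taylor_coeff_2: "taylor_coeff f 2 = deriv (deriv f) 0 / 2"
  by (simp add: taylor_coeff_def numeral_eq_Suc)

lemma taylor_coeff_3: "taylor_coeff f 3 = deriv (deriv (deriv f)) 0 / 6"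
  by (simp add: taylor_coeff_def numeral_eq_Suc)

lemma bounded_turning_Schwarz_factor:
  assumes "bounded_turning f"
  obtains h where "h holomorphic_on ball 0 1" "\<And>z. cmod z < 1 \<Longrightarrow> cmod (h z) \<le> 1"
    "\<And>z. cmod z < 1 \<Longrightarrow> deriv f z * (1 - z * h z) = 1 + z * h z"
proof -
  define p where "p = deriv f"
  have holp: "p holomorphic_on ball 0 1" and p0: "p 0 = 1" and Re_p: "\<And>z. cmod z < 1 \<Longrightarrow> 0 < Re (p z)"
    using assms holomorphic_deriv[OF _ open_ball] by (auto simp: bounded_turning_def p_def)
  have p_plus_1: "p z + 1 \<noteq> 0" if "cmod z < 1" for z
  proof -
    have "Re (p z + 1) \<noteq> 0"
      using Re_p[OF that] by simp
    then show ?thesis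
      by (metis zero_complex.sel(1))
  qed
  define w where "w z = (p z - 1) / (p z + 1)" for z
  have holw: "w holomorphic_on ball 0 1"
    unfolding w_def[abs_def] using p_plus_1 by (intro holomorphic_intros holp) auto
  have w0: "w 0 = 0"
    by (simp add: w_def p0)
  have w_lt: "cmod (w z) < 1" if "cmod z < 1" for z
    unfolding w_def using norm_inverse_cayley_less_1[OF Re_p[OF that]] .
  obtain h where holh: "h holomorphic_on ball 0 1" and w_eq: "\<And>z. cmod z < 1 \<Longrightarrow> w z = z * h z"
    and "deriv w 0 = h 0"
    using Schwarz3[OF holw w0] by blast
  have h_le: "cmod (h z) \<le> 1" if "cmod z < 1" for z
  proof (cases "z = 0")
    case True
    then show ?thesis
      using Schwarz_Lemma'[OF holw w0 w_lt] \<open>deriv w 0 = h 0\<close> by simp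
  next
    case False
    have "cmod z * cmod (h z) \<le> cmod z * 1"
      using Schwarz_Lemma'[OF holw w0 w_lt] w_eq that by (simp add: norm_mult)
    then show ?thesis
      using False by simp
  qed
  have "p z * (1 - z * h z) = 1 + z * h z" if "cmod z < 1" for z
  proof -
    have "(p z - 1) / (p z + 1) = z * h z"
      using w_eq[OF that] by (simp add: w_def)
    then have "p z - 1 = z * h z * (p z + 1)"
      using p_plus_1[OF that] by (simp add: divide_eq_eq)
    then show ?thesis
      by (simp add: algebra_simps)
  qed
  then show ?thesis
    using that holh h_le by (simp add: p_def)
qed

lemma bounded_turning_of_Schwarz_factor:
  assumes holh: "h holomorphic_on ball 0 1" and h_le: "\<And>z. cmod z < 1 \<Longrightarrow> cmod (h z) \<le> 1"
  obtains f where "bounded_turning f"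
    "\<And>z. cmod z < 1 \<Longrightarrow> deriv f z * (1 - z * h z) = 1 + z * h z"
proof -
  have zh_lt: "cmod (z * h z) < 1" if "cmod z < 1" for z
  proof -
    have "cmod z * cmod (h z) \<le> cmod z"
      using h_le[OF that] by (simp add: mult_left_le)
    then show ?thesis
      using that by (simp add: norm_mult)
  qed
  then have zh_ne: "1 - z * h z \<noteq> 0" if "cmod z < 1" for z
    using that by force
  define p where "p z = (1 + z * h z) / (1 - z * h z)" for z
  have holp: "p holomorphic_on ball 0 1"
    unfolding p_def[abs_def] using zh_ne by (intro holomorphic_intros holh) auto
  obtain f where holf: "f holomorphic_on ball 0 1" and "f 0 = 0"
    and f': "\<And>z. z \<in> ball 0 1 \<Longrightarrow> deriv f z = p z"
    using convex_primitive_vanishing[OF convex_ball open_ball holp, of 0] by auto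
  have "bounded_turning f"
    unfolding bounded_turning_def
    using holf \<open>f 0 = 0\<close> f' Re_cayley_pos[OF zh_lt] by (simp add: p_def)
  moreover have "deriv f z * (1 - z * h z) = 1 + z * h z" if "cmod z < 1" for z
    using f' zh_ne that by (simp add: p_def)
  ultimately show ?thesis
    using that by blast
qed

lemma gammas_of_Schwarz_factor:
  assumes holf: "f holomorphic_on ball 0 1" and holh: "h holomorphic_on ball 0 1"
    and factor: "\<And>z. cmod z < 1 \<Longrightarrow> deriv f z * (1 - z * h z) = 1 + z * h z"
  shows "gamma1 f = h 0 / 2" "gamma2 f = deriv h 0 / 3 + (h 0)^2 / 12"
proof -
  define p where "p = deriv f"
  define p1 where "p1 = deriv p"
  define h1 where "h1 = deriv h"
  have holp: "p holomorphic_on ball 0 1"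
    unfolding p_def by (rule holomorphic_deriv[OF holf open_ball])
  have holp1: "p1 holomorphic_on ball 0 1"
    unfolding p1_def by (rule holomorphic_deriv[OF holp open_ball])
  have holh1: "h1 holomorphic_on ball 0 1"
    unfolding h1_def by (rule holomorphic_deriv[OF holh open_ball])
  have dp: "(p has_field_derivative p1 z) (at z)"
    and dp1: "(p1 has_field_derivative deriv p1 z) (at z)"
    and dh: "(h has_field_derivative h1 z) (at z)"
    and dh1: "(h1 has_field_derivative deriv h1 z) (at z)" if "cmod z < 1" for z
    using that holomorphic_derivI[OF holp open_ball] holomorphic_derivI[OF holp1 open_ball]
      holomorphic_derivI[OF holh open_ball] holomorphic_derivI[OF holh1 open_ball]
    by (simp_all add: p1_def h1_def)
  have p0: "p 0 = 1"
    using factor[of 0] by (simp add: p_def)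
  define G where "G z = p1 z * (1 - z * h z) - p z * (h z + z * h1 z) - (h z + z * h1 z)" for z
  have G_eq_0: "G z = 0" if "cmod z < 1" for z
  proof (rule has_field_derivative_vanishing_on_open[OF open_ball[of 0 1]])
    show "((\<lambda>z. p z * (1 - z * h z) - (1 + z * h z)) has_field_derivative G z) (at z)"
      unfolding G_def
      by (auto intro!: derivative_eq_intros dp[OF that] dh[OF that] simp: algebra_simps)
  qed (use that factor in \<open>auto simp: p_def\<close>)
  have p1_0: "p1 0 = 2 * h 0"
    using G_eq_0[of 0] by (simp add: G_def p0)
  have dG: "(G has_field_derivative deriv p1 0 - 2 * p1 0 * h 0 - 4 * h1 0) (at 0)"
    unfolding G_def[abs_def]
    by (auto intro!: derivative_eq_intros dp dh dp1 dh1 simp: algebra_simps p0)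
  have "deriv p1 0 - 2 * p1 0 * h 0 - 4 * h1 0 = 0"
    by (rule has_field_derivative_vanishing_on_open[OF open_ball[of 0 1] _ _ dG]) (auto simp: G_eq_0)
  then have p2_0: "deriv p1 0 = 2 * p1 0 * h 0 + 4 * h1 0"
    by (simp add: algebra_simps)
  show "gamma1 f = h 0 / 2"
    by (simp add: gamma1_def taylor_coeff_2 p1_0 flip: p_def p1_def)
  show "gamma2 f = deriv h 0 / 3 + (h 0)^2 / 12"
    by (simp add: gamma2_def taylor_coeff_2 taylor_coeff_3 p1_0 p2_0 field_simps power2_eq_square
        flip: p_def p1_def h1_def)
qed

lemma bounded_turning_gamma_difference_bounds:
  assumes bt: "bounded_turning f"
  shows "- 1 / sqrt 5 \<le> cmod (gamma2 f) - cmod (gamma1 f)"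
    and "cmod (gamma2 f) - cmod (gamma1 f) \<le> 1 / 3"
proof -
  obtain h where holh: "h holomorphic_on ball 0 1" and h_le: "\<And>z. cmod z < 1 \<Longrightarrow> cmod (h z) \<le> 1"
    and factor: "\<And>z. cmod z < 1 \<Longrightarrow> deriv f z * (1 - z * h z) = 1 + z * h z"
    using bounded_turning_Schwarz_factor[OF bt] by blast
  have holf: "f holomorphic_on ball 0 1"
    using bt by (simp add: bounded_turning_def)
  have g1: "gamma1 f = h 0 / 2" and g2: "gamma2 f = deriv h 0 / 3 + (h 0)^2 / 12"
    using gammas_of_Schwarz_factor[OF holf holh] factor by blast+
  show "- 1 / sqrt 5 \<le> cmod (gamma2 f) - cmod (gamma1 f)"
    and "cmod (gamma2 f) - cmod (gamma1 f) \<le> 1 / 3"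
    unfolding g1 g2 using gamma_difference_bounds[OF Schwarz_Pick_deriv_0_le[OF holh h_le]] by simp_all
qed

lemma bounded_turning_gamma1_0_gamma2_third:
  "\<exists>f. bounded_turning f \<and> gamma1 f = 0 \<and> gamma2 f = 1 / 3"
proof -
  obtain f where "bounded_turning f" and factor: "\<And>z. cmod z < 1 \<Longrightarrow> deriv f z * (1 - z * z) = 1 + z * z"
    using bounded_turning_of_Schwarz_factor[of "\<lambda>z. z"] by auto
  moreover have "f holomorphic_on ball 0 1"
    using \<open>bounded_turning f\<close> by (simp add: bounded_turning_def)
  ultimately show ?thesis
    using gammas_of_Schwarz_factor[of f "\<lambda>z. z"] by auto
qed

lemma bounded_turning_gamma1_inv_sqrt5_gamma2_0:
  "\<exists>f. bounded_turning f \<and> gamma1 f = 1 / sqrt 5 \<and> gamma2 f = 0"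
proof -
  define u where "u = complex_of_real (2 / sqrt 5)"
  have u_lt: "cmod u < 1"
    unfolding u_def norm_of_real by (simp add: real_less_rsqrt)
  have u_sq: "u^2 = 4 / 5"
    by (simp add: u_def power_divide flip: of_real_power)
  define h where "h z = - Moebius_function 0 u z" for z
  have holh: "h holomorphic_on ball 0 1"
    unfolding h_def[abs_def] by (intro holomorphic_intros Moebius_function_holomorphic[OF u_lt])
  have h_le: "cmod (h z) \<le> 1" if "cmod z < 1" for z
    unfolding h_def norm_minus_cancel using Moebius_function_norm_lt_1[OF u_lt that, of 0] by (rule less_imp_le)
  have "(h has_field_derivative u^2 - 1) (at 0)"
    unfolding h_def[abs_def] Moebius_function_simple
    by (auto intro!: derivative_eq_intros simp: u_def power2_eq_square)
  then have dh0: "deriv h 0 = u^2 - 1"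
    by (rule DERIV_imp_deriv)
  have h0: "h 0 = u"
    by (simp add: h_def Moebius_function_of_zero)
  obtain f where bt: "bounded_turning f" and factor: "\<And>z. cmod z < 1 \<Longrightarrow> deriv f z * (1 - z * h z) = 1 + z * h z"
    using bounded_turning_of_Schwarz_factor[OF holh h_le] by blast
  have "f holomorphic_on ball 0 1"
    using bt by (simp add: bounded_turning_def)
  then have "gamma1 f = u / 2" "gamma2 f = (u^2 - 1) / 3 + u^2 / 12"
    using gammas_of_Schwarz_factor[OF _ holh] factor by (simp_all add: h0 dh0)
  moreover have "u / 2 = 1 / sqrt 5"
    by (simp add: u_def)
  moreover have "(u^2 - 1) / 3 + u^2 / 12 = 0"
    by (simp add: u_sq)
  ultimately show ?thesis
    using bt by auto
qed

theorem mainTheorem8: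
  shows "(\<forall>f. bounded_turning f \<longrightarrow>
            - 1 / sqrt 5 \<le> cmod (gamma2 f) - cmod (gamma1 f) \<and>
            cmod (gamma2 f) - cmod (gamma1 f) \<le> 1 / 3)
       \<and> (\<exists>f. bounded_turning f \<and> cmod (gamma2 f) - cmod (gamma1 f) = - 1 / sqrt 5)
       \<and> (\<exists>f. bounded_turning f \<and> cmod (gamma2 f) - cmod (gamma1 f) = 1 / 3)"
proof -
  obtain f_lo where lo: "bounded_turning f_lo" "gamma1 f_lo = 1 / sqrt 5" "gamma2 f_lo = 0"
    using bounded_turning_gamma1_inv_sqrt5_gamma2_0 by blast
  obtain f_up where up: "bounded_turning f_up" "gamma1 f_up = 0" "gamma2 f_up = 1 / 3"
    using bounded_turning_gamma1_0_gamma2_third by blast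
  have "cmod (gamma2 f_lo) - cmod (gamma1 f_lo) = - 1 / sqrt 5"
    unfolding lo(2,3) by (simp add: norm_divide)
  moreover have "cmod (gamma2 f_up) - cmod (gamma1 f_up) = 1 / 3"
    unfolding up(2,3) by (simp add: norm_divide)
  ultimately show ?thesis
    using bounded_turning_gamma_difference_bounds lo(1) up(1) by blast
qed

end
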